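(* Let Assumptions 1 and 2 hold, let $\eta>0$, and define $\mathcal R:\Delta_N\to\mathbb{R}$ by $\mathcal R(x)=\sup_{\theta\in\mathbb{R}^N}\{\langle\theta,x\rangle-\varphi_\eta(\theta)\}$ (equivalently $\mathcal R=\eta\varphi_1^*$, where $\varphi_1^*$ is the convex conjugate of $\varphi_1$). Then: (i) $\mathcal R$ is $\frac{\eta}{L}$-strongly convex on $\Delta_N$ with respect to $\|\cdot\|_\infty$, i.e. $\mathcal R(\lambda x+(1-\lambda)y)\le\lambda\mathcal R(x)+(1-\lambda)\mathcal R(y)-\frac{\eta}{2L}\lambda(1-\lambda)\|x-y\|_\infty^2$ for all $x,y\in\Delta_N$, $\lambda\in[0,1]$; (ii) $\mathcal R$, viewed as a function on the affine hull $\{x:\sum_ix_i=1\}$, is differentiable at every point of the relative interior of $\Delta_N$; (iii) for every $\theta\in\mathbb{R}^N$, the problem $\max_{x\in\Delta_N}\{\langle\theta,x\rangle-\mathcal R(x)\}$ has a unique solution, and this solution is $\nabla\varphi_\eta(\theta)$.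
   Context: Let $N\ge 2$, $A=\{1,\dots,N\}$, and $\Delta_N=\{x\in\mathbb{R}^N: x_i\ge 0,\ \sum_i x_i=1\}$. Let $\epsilon=(\epsilon_1,\dots,\epsilon_N)$ be a random vector satisfying Assumption 1: each $\epsilon_i$ is integrable with $\mathbb{E}[\epsilon_i]=0$, and the law of $\epsilon$ is absolutely continuous with respect to Lebesgue measure on $\mathbb{R}^N$ with support all of $\mathbb{R}^N$. For $\eta>0$ the social surplus function is $\varphi_\eta(\theta)=\mathbb{E}[\max_{j\in A}(\theta_j+\eta\epsilon_j)]$, $\theta\in\mathbb{R}^N$; thus $\varphi_\eta(\theta)=\eta\varphi_1(\theta/\eta)$. $\varphi_\eta$ is convex and differentiable with $\nabla\varphi_\eta(\theta)\in\Delta_N$. Assumption 2: $\varphi_1$ is twice continuously differentiable and there is a constant $L>0$ with $2\,\mathrm{tr}(\nabla^2\varphi_1(\theta))\le L$ for all $\theta\in\mathbb{R}^N$. *)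

theory Defs
  imports "HOL-Probability.Probability"
begin

text \<open>Here the random vector epsilon is represented by its law P, a probability
measure on the Borel sets of real^'n; the index type 'n plays the role of A.\<close>

definition surplus :: "(real^'n::finite) measure \<Rightarrow> real \<Rightarrow> real^'n \<Rightarrow> real" where
  "surplus P \<eta> \<theta> = (\<integral>e. Max (range (\<lambda>j. \<theta>$j + \<eta> * e$j)) \<partial>P)"

definition prob_simplex :: "(real^'n::finite) set" where
  "prob_simplex = {x. (\<forall>i. 0 \<le> x$i) \<and> (\<Sum>i\<in>UNIV. x$i) = 1}"

definition regR :: "(real^'n::finite) measure \<Rightarrow> real \<Rightarrow> real^'n \<Rightarrow> real" where
  "regR P \<eta> x = (SUP \<theta>. \<theta> \<bullet> x - surplus P \<eta> \<theta>)"

end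

theory Submission
  imports Defs
begin

text \<open>
  R is the convex conjugate of F = phi_eta, and the argument only uses a few properties of F:
  F is convex, differentiable and monotone,
  F(theta + c(1,...,1)) = F(theta) + c, max_j theta_j \<le> F(theta), F is strictly convex in every
  direction other than (1,...,1), and along each coordinate axis its curvature is at most 2C.
  For phi_1 these follow from the max-of-sums form of the integrand, the mean-zero and full-support
  assumptions on epsilon, and the trace bound on the Hessian (C = L/4); the scaling
  phi_eta(theta) = eta phi_1(theta/eta) turns C into L/(4 eta).

  (iii) x maximises theta.x - R(x) over the simplex iff x is a subgradient of F at theta,
  i.e. x = grad F(theta).
  (i) Moving theta along one coordinate axis inside the supremum defining R and using the curvature
  bound gives strong convexity of R in the coordinate difference x_k - y_k, hence in the sup norm.
  (ii) Every x with positive entries equals grad F(theta) for a minimiser theta of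
  F(theta) - theta.x. Strict convexity makes the Bregman divergence of F at theta grow linearly
  away from the line R(1,...,1), which bounds R(y) - R(x) - theta.(y - x) by o(|y - x|).
\<close>

definition vmax :: "real^'n::finite \<Rightarrow> real" where
  "vmax v = Max (range (\<lambda>j. v$j))"

lemma component_le_vmax: "v$j \<le> vmax v"
  unfolding vmax_def by (rule Max_ge) auto

lemma vmax_le_iff: "vmax v \<le> b \<longleftrightarrow> (\<forall>j. v$j \<le> b)"
  unfolding vmax_def by (subst Max_le_iff) auto

lemma vmax_attained: obtains j where "vmax v = v$j"
proof -
  have "vmax v \<in> range (\<lambda>j. v$j)" unfolding vmax_def by (rule Max_in) auto
  thus ?thesis using that by auto
qed

lemma vmax_mono: "(\<And>j. v$j \<le> w$j) \<Longrightarrow> vmax v \<le> vmax w"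
  using component_le_vmax order_trans unfolding vmax_le_iff by blast

lemma vmax_add_const: "vmax (v + (\<chi> i. c)) = vmax v + c"
proof (rule antisym)
  show "vmax (v + (\<chi> i. c)) \<le> vmax v + c"
    by (simp add: vmax_le_iff component_le_vmax)
  obtain j where "vmax v = v$j" by (rule vmax_attained)
  thus "vmax v + c \<le> vmax (v + (\<chi> i. c))"
    using component_le_vmax[of "v + (\<chi> i. c)" j] by simp
qed

lemma vmax_scaleR: "0 \<le> a \<Longrightarrow> vmax (a *\<^sub>R v) = a * vmax v"
proof -
  assume a: "0 \<le> a"
  obtain j where j: "vmax v = v$j" by (rule vmax_attained)
  have "vmax (a *\<^sub>R v) \<le> a * vmax v"
    using a component_le_vmax by (auto simp: vmax_le_iff intro: mult_left_mono)
  moreover have "a * vmax v \<le> vmax (a *\<^sub>R v)"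
    using j component_le_vmax[of "a *\<^sub>R v" j] by simp
  ultimately show ?thesis by simp
qed

lemma vmax_zero [simp]: "vmax 0 = 0"
  using vmax_scaleR[of 0 0] by simp

lemma convex_vmax: "convex_on UNIV vmax"
proof (rule convex_onI)
  fix t :: real and v w :: "real^'n" assume "0 < t" "t < 1"
  then have "(1 - t) * v$j + t * w$j \<le> (1 - t) * vmax v + t * vmax w" for j
    using component_le_vmax by (intro add_mono mult_left_mono) auto
  then show "vmax ((1 - t) *\<^sub>R v + t *\<^sub>R w) \<le> (1 - t) * vmax v + t * vmax w"
    by (simp add: vmax_le_iff)
qed simp

lemma vmax_add_vmax_uminus_pos:
  assumes "v$i \<noteq> v$k"
  shows "0 < vmax v + vmax (- v)"
proof -
  have "v$i \<le> vmax v" "v$k \<le> vmax v" "- (v$i) \<le> vmax (- v)" "- (v$k) \<le> vmax (- v)"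
    using component_le_vmax[of v] component_le_vmax[of "- v"] by simp_all
  then show ?thesis
    using assms by (cases "v$i < v$k") auto
qed

lemma vmax_le_norm: "\<bar>vmax v\<bar> \<le> norm v"
proof -
  obtain j where "vmax v = v$j" by (rule vmax_attained)
  thus ?thesis using component_le_norm_cart by metis
qed

lemma vmax_lipschitz: "vmax v \<le> vmax w + norm (v - w)"
proof -
  obtain j where "vmax v = v$j" by (rule vmax_attained)
  moreover have "v$j - w$j \<le> norm (v - w)"
    using component_le_norm_cart[of "v - w" j] by simp
  ultimately show ?thesis using component_le_vmax[of w j] by linarith
qed

lemma continuous_on_vmax: "continuous_on UNIV vmax"
proof (rule lipschitz_on_continuous_on)
  show "1-lipschitz_on UNIV vmax"
  proof (rule lipschitz_onI)
    fix v w :: "real^'n"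
    show "dist (vmax v) (vmax w) \<le> 1 * dist v w"
      using vmax_lipschitz[of v w] vmax_lipschitz[of w v] norm_minus_commute[of v w]
      unfolding dist_real_def dist_norm by linarith
  qed simp
qed

lemma has_real_derivative_along_line:
  fixes f :: "'a::real_inner \<Rightarrow> real"
  assumes "(f has_derivative (\<lambda>h. a \<bullet> h)) (at (\<theta> + t *\<^sub>R w))"
  shows "((\<lambda>s. f (\<theta> + s *\<^sub>R w)) has_real_derivative a \<bullet> w) (at t)"
proof -
  have "((\<lambda>s. \<theta> + s *\<^sub>R w) has_derivative (\<lambda>h. h *\<^sub>R w)) (at t)"
    by (auto intro!: derivative_eq_intros)
  from has_derivative_compose[OF this assms] show ?thesis
    unfolding has_field_derivative_def by (rule has_derivative_eq_rhs) (auto simp: fun_eq_iff)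
qed

lemma convex_on_along_line:
  assumes "convex_on UNIV f"
  shows "convex_on UNIV (\<lambda>s::real. f (\<theta> + s *\<^sub>R w))"
proof (rule convex_onI)
  fix t s s' :: real assume "0 < t" "t < 1"
  moreover have "\<theta> + ((1 - t) *\<^sub>R s + t *\<^sub>R s') *\<^sub>R w = (1 - t) *\<^sub>R (\<theta> + s *\<^sub>R w) + t *\<^sub>R (\<theta> + s' *\<^sub>R w)"
    by (simp add: algebra_simps)
  ultimately show "f (\<theta> + ((1 - t) *\<^sub>R s + t *\<^sub>R s') *\<^sub>R w) \<le> (1 - t) * f (\<theta> + s *\<^sub>R w) + t * f (\<theta> + s' *\<^sub>R w)"
    using convex_onD[OF assms, of t] by simp
qed simp

lemma convex_gradient_inequality:
  fixes f :: "'a::real_inner \<Rightarrow> real"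
  assumes "convex_on UNIV f" and "(f has_derivative (\<lambda>h. a \<bullet> h)) (at \<theta>)"
  shows "f \<theta> + a \<bullet> (\<theta>' - \<theta>) \<le> f \<theta>'"
proof -
  let ?w = "\<theta>' - \<theta>"
  have "((\<lambda>s. f (\<theta> + s *\<^sub>R ?w)) has_real_derivative a \<bullet> ?w) (at 0)"
    by (rule has_real_derivative_along_line) (use assms(2) in simp)
  from convex_on_imp_above_tangent[OF convex_on_along_line[OF assms(1)], of 0 1, OF _ _ _ this]
  show ?thesis by simp
qed

lemma subgradient_eq_gradient:
  fixes f :: "'a::real_inner \<Rightarrow> real"
  assumes deriv: "(f has_derivative (\<lambda>h. a \<bullet> h)) (at \<theta>)"
    and sub: "\<And>\<theta>'. f \<theta> + x \<bullet> (\<theta>' - \<theta>) \<le> f \<theta>'"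
  shows "x = a"
proof -
  define w where "w = x - a"
  define k where "k s = f (\<theta> + s *\<^sub>R w) - s * (x \<bullet> w)" for s
  have "((\<lambda>s. f (\<theta> + s *\<^sub>R w)) has_real_derivative a \<bullet> w) (at 0)"
    by (rule has_real_derivative_along_line) (use deriv in simp)
  then have "(k has_real_derivative a \<bullet> w - x \<bullet> w) (at 0)"
    unfolding k_def by (auto intro!: derivative_eq_intros)
  moreover have "\<forall>s. \<bar>0 - s\<bar> < 1 \<longrightarrow> k 0 \<le> k s"
    using sub[of "\<theta> + _ *\<^sub>R w"] by (simp add: k_def algebra_simps)
  ultimately have "a \<bullet> w - x \<bullet> w = 0"
    by (rule DERIV_local_min[OF _ zero_less_one])
  then have "w \<bullet> w = 0" by (simp add: w_def inner_diff_left)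
  then show ?thesis by (simp add: w_def)
qed

lemma has_real_derivative_gradient_component:
  fixes g :: "real^'n::finite \<Rightarrow> real^'n"
  assumes "(g has_derivative (\<lambda>h. H *v h)) (at (\<theta> + t *\<^sub>R axis j 1))"
  shows "((\<lambda>s. g (\<theta> + s *\<^sub>R axis j 1) $ k) has_real_derivative H $ k $ j) (at t)"
proof -
  have "((\<lambda>s. \<theta> + s *\<^sub>R axis j 1) has_derivative (\<lambda>h. h *\<^sub>R axis j 1)) (at t)"
    by (auto intro!: derivative_eq_intros)
  from bounded_linear.has_derivative[OF bounded_linear_vec_nth has_derivative_compose[OF this assms]]
  show ?thesis unfolding has_field_derivative_def
    by (rule has_derivative_eq_rhs)
      (auto simp: fun_eq_iff matrix_vector_mult_scaleR matrix_vector_mult_basis column_def)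
qed

lemma convex_hessian_diag_nonneg:
  fixes f :: "real^'n::finite \<Rightarrow> real"
  assumes convex: "convex_on UNIV f"
    and grad: "\<And>\<theta>. (f has_derivative (\<lambda>h. g \<theta> \<bullet> h)) (at \<theta>)"
    and hess: "\<And>\<theta>. (g has_derivative (\<lambda>h. H \<theta> *v h)) (at \<theta>)"
  shows "0 \<le> H \<theta> $ j $ j"
proof -
  define q where "q s = g (\<theta> + s *\<^sub>R axis j 1) $ j" for s
  have "mono q"
  proof (rule monoI)
    fix s s' :: real assume "s \<le> s'"
    let ?\<theta>s = "\<theta> + s *\<^sub>R axis j 1" and ?\<theta>s' = "\<theta> + s' *\<^sub>R axis j 1"
    have "f ?\<theta>s + g ?\<theta>s \<bullet> (?\<theta>s' - ?\<theta>s) \<le> f ?\<theta>s'" "f ?\<theta>s' + g ?\<theta>s' \<bullet> (?\<theta>s - ?\<theta>s') \<le> f ?\<theta>s"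
      by (intro convex_gradient_inequality[OF convex grad])+
    then have "(s' - s) * q s \<le> (s' - s) * q s'"
      by (simp add: q_def inner_axis algebra_simps flip: scaleR_diff_left)
    with \<open>s \<le> s'\<close> show "q s \<le> q s'"
      by (cases "s = s'") (auto simp: mult_le_cancel_left)
  qed
  moreover have "(q has_real_derivative H \<theta> $ j $ j) (at 0)"
    unfolding q_def by (rule has_real_derivative_gradient_component) (use hess in simp)
  ultimately show ?thesis
    using mono_on_imp_deriv_nonneg[of UNIV q] by auto
qed

lemma second_order_upper_bound:
  fixes f f' f'' :: "real \<Rightarrow> real"
  assumes "\<And>t. (f has_real_derivative f' t) (at t)"
    and "\<And>t. (f' has_real_derivative f'' t) (at t)"
    and "\<And>t. f'' t \<le> M"
  shows "f s \<le> f 0 + f' 0 * s + M / 2 * s\<^sup>2"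
proof (cases "s = 0")
  case False
  define diff where "diff m = (if m = 0 then f else if m = 1 then f' else f'')" for m :: nat
  have "\<forall>m t. m < 2 \<and> min s 0 \<le> t \<and> t \<le> max s 0 \<longrightarrow> (diff m has_real_derivative diff (Suc m) t) (at t)"
    using assms(1,2) by (auto simp: diff_def less_2_cases_iff)
  from Taylor[of 2 diff f "min s 0" "max s 0" 0 s, OF _ _ this] False
  obtain t where "f s = f 0 + f' 0 * s + f'' t / 2 * s\<^sup>2"
    by (auto simp: diff_def numeral_2_eq_2)
  moreover have "f'' t / 2 * s\<^sup>2 \<le> M / 2 * s\<^sup>2"
    using assms(3)[of t] by (intro mult_right_mono) auto
  ultimately show ?thesis by linarith
qed simp

lemma coordinate_smooth_of_trace_bound:
  fixes f :: "real^'n::finite \<Rightarrow> real"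
  assumes convex: "convex_on UNIV f"
    and grad: "\<And>\<theta>. (f has_derivative (\<lambda>h. g \<theta> \<bullet> h)) (at \<theta>)"
    and hess: "\<And>\<theta>. (g has_derivative (\<lambda>h. H \<theta> *v h)) (at \<theta>)"
    and trace_bd: "\<And>\<theta>. 2 * trace (H \<theta>) \<le> L"
  shows "f (\<theta> + s *\<^sub>R axis k 1) \<le> f \<theta> + s * g \<theta> $ k + L / 4 * s\<^sup>2"
proof -
  have diag_le: "H \<theta>' $ k $ k \<le> L / 2" for \<theta>'
  proof -
    have "H \<theta>' $ k $ k \<le> (\<Sum>j\<in>UNIV. H \<theta>' $ j $ j)"
      by (rule member_le_sum) (auto intro: convex_hessian_diag_nonneg[OF convex grad hess])
    then show ?thesis using trace_bd[of \<theta>'] by (simp add: trace_def)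
  qed
  have "f (\<theta> + s *\<^sub>R axis k 1) \<le> f (\<theta> + 0 *\<^sub>R axis k 1) + g (\<theta> + 0 *\<^sub>R axis k 1) $ k * s + (L / 2) / 2 * s\<^sup>2"
  proof (rule second_order_upper_bound[where f'' = "\<lambda>t. H (\<theta> + t *\<^sub>R axis k 1) $ k $ k"])
    show "((\<lambda>s. f (\<theta> + s *\<^sub>R axis k 1)) has_real_derivative g (\<theta> + t *\<^sub>R axis k 1) $ k) (at t)" for t
      using has_real_derivative_along_line[OF grad[of "\<theta> + t *\<^sub>R axis k 1"]] by (simp add: inner_axis)
    show "((\<lambda>s. g (\<theta> + s *\<^sub>R axis k 1) $ k) has_real_derivative H (\<theta> + t *\<^sub>R axis k 1) $ k $ k) (at t)" for t
      by (rule has_real_derivative_gradient_component[OF hess])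
  qed (rule diag_le)
  then show ?thesis by (simp add: mult.commute)
qed

definition conjugate :: "('a::real_inner \<Rightarrow> real) \<Rightarrow> 'a \<Rightarrow> real" where
  "conjugate f x = (SUP \<theta>. \<theta> \<bullet> x - f \<theta>)"

lemma sum_prob_simplex: "x \<in> prob_simplex \<Longrightarrow> (\<Sum>i\<in>UNIV. x$i) = 1"
  by (simp add: prob_simplex_def)

lemma inner_const_vec: "(\<chi> i. c) \<bullet> (x::real^'n::finite) = c * (\<Sum>i\<in>UNIV. x$i)"
  by (simp add: inner_vec_def sum_distrib_left)

lemma rel_interior_prob_simplex_pos:
  fixes x :: "real^'n::finite"
  assumes "x \<in> rel_interior prob_simplex"
  shows "0 < x$i"
proof (rule ccontr)
  assume "\<not> 0 < x$i"
  obtain e where e: "e > 0" "ball x e \<inter> affine hull prob_simplex \<subseteq> prob_simplex"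
    and x: "x \<in> prob_simplex"
    using assms unfolding rel_interior_ball by blast
  have xi: "x$i = 0"
    using x \<open>\<not> 0 < x$i\<close> unfolding prob_simplex_def by (metis (mono_tags) mem_Collect_eq order_less_le)
  obtain j where "x$j \<noteq> 0"
    using sum_prob_simplex[OF x] by (metis (no_types, lifting) sum.neutral zero_neq_one)
  with xi have "j \<noteq> i" by auto
  have axis_in: "axis k 1 \<in> (prob_simplex :: (real^'n) set)" for k
    by (auto simp: prob_simplex_def axis_def)
  define y where "y = 1 *\<^sub>R x + (e/4) *\<^sub>R axis j 1 + (- e/4) *\<^sub>R axis i 1"
  have "y \<in> affine hull prob_simplex"
    unfolding y_def
    by (rule mem_affine_3[OF affine_affine_hull hull_inc[OF x] hull_inc[OF axis_in] hull_inc[OF axis_in]]) simp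
  moreover have "y \<in> ball x e"
  proof -
    have "y - x = (e/4) *\<^sub>R axis j 1 + (- e/4) *\<^sub>R axis i 1"
      by (simp add: y_def)
    then have "norm (y - x) \<le> norm ((e/4) *\<^sub>R (axis j 1 :: real^'n)) + norm ((- e/4) *\<^sub>R (axis i 1 :: real^'n))"
      by (metis norm_triangle_ineq)
    also have "\<dots> < e" using e by simp
    finally show ?thesis by (simp add: dist_norm norm_minus_commute)
  qed
  ultimately have "y \<in> prob_simplex" using e by blast
  moreover have "y$i < 0" using xi \<open>j \<noteq> i\<close> e by (simp add: y_def axis_def)
  ultimately show False by (simp add: prob_simplex_def not_less[symmetric])
qed

lemma infnorm_attained_cart: "\<exists>k. infnorm (x :: real^'n::finite) = \<bar>x$k\<bar>"
proof -
  have fin: "finite {\<bar>x$i\<bar> |i. i \<in> UNIV}" and ne: "{\<bar>x$i\<bar> |i. i \<in> UNIV} \<noteq> {}"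
    by (simp_all add: full_SetCompr_eq)
  from Max_in[OF fin ne] show ?thesis
    unfolding infnorm_cart cSup_eq_Max[OF fin ne] by auto
qed

locale surplus_potential =
  fixes F :: "real^'n::finite \<Rightarrow> real" and G :: "real^'n \<Rightarrow> real^'n" and C :: real
  assumes has_gradient: "\<And>\<theta>. (F has_derivative (\<lambda>h. G \<theta> \<bullet> h)) (at \<theta>)"
    and convex: "convex_on UNIV F"
    and add_const: "\<And>\<theta> c. F (\<theta> + (\<chi> i. c)) = F \<theta> + c"
    and mono: "\<And>\<theta> \<theta>'. (\<And>i. \<theta>$i \<le> \<theta>'$i) \<Longrightarrow> F \<theta> \<le> F \<theta>'"
    and component_le: "\<And>\<theta> j. \<theta>$j \<le> F \<theta>"
    and strict_midpoint: "\<And>\<theta> d i k. d$i \<noteq> d$k \<Longrightarrow> F (\<theta> + (1/2) *\<^sub>R d) < (F \<theta> + F (\<theta> + d)) / 2"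
    and coordinate_smooth: "\<And>\<theta> s k. F (\<theta> + s *\<^sub>R axis k 1) \<le> F \<theta> + s * G \<theta> $ k + C * s\<^sup>2"
    and C_pos: "C > 0"
begin

lemma gradient_inequality: "F \<theta> + G \<theta> \<bullet> (\<theta>' - \<theta>) \<le> F \<theta>'"
  by (rule convex_gradient_inequality[OF convex has_gradient])

lemma gradient_in_simplex: "G \<theta> \<in> prob_simplex"
proof -
  have "0 \<le> G \<theta> $ i" for i
  proof -
    have "F \<theta> - G \<theta> $ i \<le> F (\<theta> - axis i 1)"
      using gradient_inequality[of \<theta> "\<theta> - axis i 1"] by (simp add: inner_axis)
    moreover have "F (\<theta> - axis i 1) \<le> F \<theta>"
      by (rule mono) (simp add: axis_def)
    ultimately show ?thesis by simp
  qed
  moreover have "c * (\<Sum>i\<in>UNIV. G \<theta> $ i) \<le> c" for c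
  proof -
    have "G \<theta> \<bullet> (\<chi> i. c) = c * (\<Sum>i\<in>UNIV. G \<theta> $ i)"
      by (simp add: inner_vec_def sum_distrib_left mult.commute)
    then show ?thesis
      using gradient_inequality[of \<theta> "\<theta> + (\<chi> i. c)"] by (simp add: add_const)
  qed
  from this[of 1] this[of "-1"] have "(\<Sum>i\<in>UNIV. G \<theta> $ i) = 1" by simp
  ultimately show ?thesis by (simp add: prob_simplex_def)
qed

lemma inner_le: "x \<in> prob_simplex \<Longrightarrow> \<theta> \<bullet> x \<le> F \<theta>"
proof -
  assume x: "x \<in> prob_simplex"
  have "\<theta> \<bullet> x = (\<Sum>j\<in>UNIV. x$j * \<theta>$j)" by (simp add: inner_vec_def mult.commute)
  also have "\<dots> \<le> (\<Sum>j\<in>UNIV. x$j * F \<theta>)"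
    using x component_le by (intro sum_mono mult_left_mono) (auto simp: prob_simplex_def)
  also have "\<dots> = F \<theta>" using x by (simp add: prob_simplex_def flip: sum_distrib_right)
  finally show ?thesis .
qed

lemma conjugate_ge: "x \<in> prob_simplex \<Longrightarrow> \<theta> \<bullet> x - F \<theta> \<le> conjugate F x"
  unfolding conjugate_def by (rule cSUP_upper) (auto simp: bdd_above_def inner_le intro!: exI[of _ 0])

lemma conjugate_le: "(\<And>\<theta>. \<theta> \<bullet> x - F \<theta> \<le> b) \<Longrightarrow> conjugate F x \<le> b"
  unfolding conjugate_def by (rule cSUP_least) auto

lemma conjugate_gradient: "conjugate F (G \<theta>) = \<theta> \<bullet> G \<theta> - F \<theta>"
proof (rule antisym)
  show "conjugate F (G \<theta>) \<le> \<theta> \<bullet> G \<theta> - F \<theta>"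
  proof (rule conjugate_le)
    show "\<theta>' \<bullet> G \<theta> - F \<theta>' \<le> \<theta> \<bullet> G \<theta> - F \<theta>" for \<theta>'
      using gradient_inequality[of \<theta> \<theta>'] by (simp add: inner_diff_right inner_commute)
  qed
  show "\<theta> \<bullet> G \<theta> - F \<theta> \<le> conjugate F (G \<theta>)"
    by (rule conjugate_ge[OF gradient_in_simplex])
qed

lemma conjugate_argmax_iff:
  "x \<in> prob_simplex \<and> (\<forall>y\<in>prob_simplex. \<theta> \<bullet> y - conjugate F y \<le> \<theta> \<bullet> x - conjugate F x)
     \<longleftrightarrow> x = G \<theta>"
proof
  assume x: "x \<in> prob_simplex \<and> (\<forall>y\<in>prob_simplex. \<theta> \<bullet> y - conjugate F y \<le> \<theta> \<bullet> x - conjugate F x)"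
  then have "conjugate F x \<le> \<theta> \<bullet> x - F \<theta>"
    using gradient_in_simplex[of \<theta>] conjugate_gradient[of \<theta>] by force
  then have "F \<theta> + x \<bullet> (\<theta>' - \<theta>) \<le> F \<theta>'" for \<theta>'
    using conjugate_ge[of x \<theta>'] x by (simp add: inner_diff_right inner_commute)
  then show "x = G \<theta>"
    by (rule subgradient_eq_gradient[OF has_gradient])
next
  assume x: "x = G \<theta>"
  show "x \<in> prob_simplex \<and> (\<forall>y\<in>prob_simplex. \<theta> \<bullet> y - conjugate F y \<le> \<theta> \<bullet> x - conjugate F x)"
  proof (intro conjI ballI)
    show "x \<in> prob_simplex" unfolding x by (rule gradient_in_simplex)
    show "\<theta> \<bullet> y - conjugate F y \<le> \<theta> \<bullet> x - conjugate F x" if "y \<in> prob_simplex" for y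
      unfolding x conjugate_gradient using conjugate_ge[OF that, of \<theta>] by linarith
  qed
qed

lemma conjugate_ge_axis_shift:
  assumes "x \<in> prob_simplex"
  shows "\<theta> \<bullet> x - F \<theta> + a * (x$k - G \<theta> $ k) - C * a\<^sup>2 \<le> conjugate F x"
proof -
  have "(\<theta> + a *\<^sub>R axis k 1) \<bullet> x - F (\<theta> + a *\<^sub>R axis k 1) \<le> conjugate F x"
    by (rule conjugate_ge[OF assms])
  then show ?thesis
    using coordinate_smooth[of \<theta> a k] by (simp add: inner_add_left inner_axis' algebra_simps)
qed

lemma conjugate_strongly_convex_coordinate:
  assumes x: "x \<in> prob_simplex" and y: "y \<in> prob_simplex" and t: "0 \<le> t" "t \<le> 1"
  shows "conjugate F (t *\<^sub>R x + (1 - t) *\<^sub>R y)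
           \<le> t * conjugate F x + (1 - t) * conjugate F y - t * (1 - t) / (4 * C) * (x$k - y$k)\<^sup>2"
proof (rule conjugate_le)
  fix \<theta>
  \<comment> \<open>Evaluate the suprema defining the conjugate at x and y at \<open>\<theta> + (1 - t) s e\<^sub>k\<close> and
    \<open>\<theta> - t s e\<^sub>k\<close>: the gradient terms cancel, and this s is the optimal step.\<close>
  define s where "s = (x$k - y$k) / (2 * C)"
  have "t * (\<theta> \<bullet> x - F \<theta> + ((1 - t) * s) * (x$k - G \<theta> $ k) - C * ((1 - t) * s)\<^sup>2)
        + (1 - t) * (\<theta> \<bullet> y - F \<theta> + (- t * s) * (y$k - G \<theta> $ k) - C * (- t * s)\<^sup>2)
      \<le> t * conjugate F x + (1 - t) * conjugate F y"
    using t by (intro add_mono mult_left_mono conjugate_ge_axis_shift x y) auto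
  moreover have "t * (\<theta> \<bullet> x - F \<theta> + ((1 - t) * s) * (x$k - G \<theta> $ k) - C * ((1 - t) * s)\<^sup>2)
        + (1 - t) * (\<theta> \<bullet> y - F \<theta> + (- t * s) * (y$k - G \<theta> $ k) - C * (- t * s)\<^sup>2)
      = \<theta> \<bullet> (t *\<^sub>R x + (1 - t) *\<^sub>R y) - F \<theta> + t * (1 - t) * (s * (x$k - y$k) - C * s\<^sup>2)"
    by (simp add: inner_add_right algebra_simps power2_eq_square)
  moreover have "t * (1 - t) * (s * (x$k - y$k) - C * s\<^sup>2) = t * (1 - t) / (4 * C) * (x$k - y$k)\<^sup>2"
    using C_pos by (simp add: s_def field_simps power2_eq_square)
  ultimately show "\<theta> \<bullet> (t *\<^sub>R x + (1 - t) *\<^sub>R y) - F \<theta>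
      \<le> t * conjugate F x + (1 - t) * conjugate F y - t * (1 - t) / (4 * C) * (x$k - y$k)\<^sup>2"
    by linarith
qed

lemma vmax_le_F: "vmax \<theta> \<le> F \<theta>"
  by (metis component_le vmax_attained)

lemma continuous_on_F: "continuous_on UNIV F"
  using has_gradient has_derivative_continuous has_derivative_at_withinI
  by (intro continuous_at_imp_continuous_on) blast

lemma dual_objective_lower_bound:
  assumes "x \<in> prob_simplex"
  shows "x$k * (vmax \<theta> - \<theta>$k) \<le> F \<theta> - \<theta> \<bullet> x"
proof -
  have "x$k * (vmax \<theta> - \<theta>$k) \<le> (\<Sum>j\<in>UNIV. x$j * (vmax \<theta> - \<theta>$j))"
    using assms component_le_vmax by (intro member_le_sum mult_nonneg_nonneg) (auto simp: prob_simplex_def)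
  also have "\<dots> = vmax \<theta> - \<theta> \<bullet> x"
    using sum_prob_simplex[OF assms]
    by (simp add: inner_vec_def right_diff_distrib sum_subtractf mult.commute flip: sum_distrib_left)
  finally show ?thesis using vmax_le_F[of \<theta>] by linarith
qed

lemma dual_objective_add_const:
  assumes "x \<in> prob_simplex"
  shows "F (\<theta> + (\<chi> i. c)) - (\<theta> + (\<chi> i. c)) \<bullet> x = F \<theta> - \<theta> \<bullet> x"
  using sum_prob_simplex[OF assms] by (simp add: add_const inner_add_left inner_const_vec)

lemma dual_objective_attains_min:
  assumes x: "x \<in> prob_simplex" and pos: "\<And>i. 0 < x$i"
  obtains \<theta>\<^sub>0 where "\<And>\<theta>. F \<theta>\<^sub>0 - \<theta>\<^sub>0 \<bullet> x \<le> F \<theta> - \<theta> \<bullet> x"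
proof -
  define K where "K \<theta> = F \<theta> - \<theta> \<bullet> x" for \<theta>
  define \<delta> where "\<delta> = Min (range (\<lambda>i. x$i))"
  have "\<delta> \<in> range (\<lambda>i. x$i)" unfolding \<delta>_def by (rule Min_in) auto
  then have \<delta>_pos: "0 < \<delta>" using pos by auto
  have \<delta>_le: "\<delta> \<le> x$i" for i unfolding \<delta>_def by (rule Min_le) auto
  define r where "r = F 0 / \<delta> + 1"
  have r_pos: "0 < r"
    using component_le[of 0] \<delta>_pos by (simp add: r_def add_nonneg_pos)
  define B where "B = cbox (0::real^'n) (\<chi> i. r)"
  have "0 \<in> B" using r_pos by (simp add: B_def mem_box_cart less_imp_le)
  moreover have "continuous_on B K"
    unfolding K_def by (intro continuous_intros continuous_on_subset[OF continuous_on_F]) auto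
  ultimately obtain \<theta>\<^sub>0 where "\<theta>\<^sub>0 \<in> B" and min_B: "\<And>\<theta>. \<theta> \<in> B \<Longrightarrow> K \<theta>\<^sub>0 \<le> K \<theta>"
    using continuous_attains_inf[of B K] unfolding B_def by auto
  \<comment> \<open>Translated so that its smallest entry is 0, any \<open>\<theta>\<close> lies in B or has \<open>K \<theta> > K 0\<close>.\<close>
  have "K \<theta>\<^sub>0 \<le> K \<theta>" for \<theta>
  proof -
    obtain k where k: "vmax (- \<theta>) = (- \<theta>)$k" by (rule vmax_attained)
    define \<theta>' where "\<theta>' = \<theta> + (\<chi> i. - \<theta>$k)"
    have "K \<theta>' = K \<theta>" unfolding K_def \<theta>'_def by (rule dual_objective_add_const[OF x])
    have nonneg: "0 \<le> \<theta>'$i" for i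
      using component_le_vmax[of "- \<theta>" i] k by (simp add: \<theta>'_def)
    show ?thesis
    proof (cases "\<theta>' \<in> B")
      case True
      with min_B \<open>K \<theta>' = K \<theta>\<close> show ?thesis by metis
    next
      case False
      then obtain j where "r < \<theta>'$j"
        using nonneg by (auto simp: B_def mem_box_cart not_le)
      then have "\<delta> * r < x$k * vmax \<theta>'"
        using \<delta>_pos \<delta>_le[of k] component_le_vmax[of \<theta>' j] r_pos
        by (meson less_le_trans mult_mono' mult_strict_left_mono less_imp_le)
      also have "x$k * vmax \<theta>' \<le> K \<theta>'"
        using dual_objective_lower_bound[OF x, of k \<theta>'] by (simp add: K_def \<theta>'_def)
      finally have "\<delta> * r < K \<theta>'" .
      moreover have "\<delta> * r = K 0 + \<delta>"
        using \<delta>_pos by (simp add: K_def r_def field_simps)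
      ultimately have "K 0 < K \<theta>'"
        using \<delta>_pos by linarith
      then show ?thesis
        using min_B[OF \<open>0 \<in> B\<close>] \<open>K \<theta>' = K \<theta>\<close> by linarith
    qed
  qed
  then show ?thesis using that unfolding K_def by blast
qed

lemma gradient_surjective:
  assumes "x \<in> prob_simplex" and "\<And>i. 0 < x$i"
  obtains \<theta> where "G \<theta> = x"
proof -
  obtain \<theta> where min: "\<And>\<theta>'. F \<theta> - \<theta> \<bullet> x \<le> F \<theta>' - \<theta>' \<bullet> x"
    using dual_objective_attains_min[OF assms] by blast
  have "F \<theta> + x \<bullet> (\<theta>' - \<theta>) \<le> F \<theta>'" for \<theta>'
  proof -
    have "x \<bullet> (\<theta>' - \<theta>) = \<theta>' \<bullet> x - \<theta> \<bullet> x"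
      by (simp add: inner_diff_right inner_commute)
    then show ?thesis using min[of \<theta>'] by linarith
  qed
  then show ?thesis
    using that subgradient_eq_gradient[OF has_gradient] by metis
qed

definition bregman :: "real^'n \<Rightarrow> real^'n \<Rightarrow> real" where
  "bregman \<theta> d = F (\<theta> + d) - F \<theta> - G \<theta> \<bullet> d"

lemma bregman_nonneg: "0 \<le> bregman \<theta> d"
  using gradient_inequality[of \<theta> "\<theta> + d"] by (simp add: bregman_def)

lemma bregman_scaleR_le:
  assumes "0 \<le> t" "t \<le> 1"
  shows "bregman \<theta> (t *\<^sub>R d) \<le> t * bregman \<theta> d"
proof -
  have "\<theta> + t *\<^sub>R d = (1 - t) *\<^sub>R \<theta> + t *\<^sub>R (\<theta> + d)"
    by (simp add: algebra_simps)
  then show ?thesis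
    using convex_onD[OF convex, of t \<theta> "\<theta> + d"] assms by (simp add: bregman_def algebra_simps)
qed

lemma bregman_pos:
  assumes "d$i \<noteq> d$k"
  shows "0 < bregman \<theta> d"
proof -
  have "bregman \<theta> ((1/2) *\<^sub>R d) < bregman \<theta> d / 2"
    using strict_midpoint[OF assms, of \<theta>] by (simp add: bregman_def field_simps)
  then show ?thesis
    using bregman_nonneg[of \<theta> "(1/2) *\<^sub>R d"] by linarith
qed

lemma bregman_add_const: "bregman \<theta> (d + (\<chi> i. c)) = bregman \<theta> d"
  using sum_prob_simplex[OF gradient_in_simplex[of \<theta>]] add_const[of "\<theta> + d" c]
  by (simp add: bregman_def add.assoc inner_add_right inner_commute[of "G \<theta>"] inner_const_vec)

lemma continuous_on_bregman: "continuous_on UNIV (bregman \<theta>)"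
  unfolding bregman_def
  by (intro continuous_intros continuous_on_compose2[OF continuous_on_F]) auto

lemma bregman_linear_growth:
  assumes "\<epsilon> > 0"
  obtains c where "c > 0" and "\<And>d. d$i = 0 \<Longrightarrow> \<epsilon> \<le> norm d \<Longrightarrow> c * norm d \<le> bregman \<theta> d"
proof -
  define S where "S = sphere 0 \<epsilon> \<inter> {d :: real^'n. d$i = 0}"
  have "compact S"
    unfolding S_def by (intro compact_Int_closed compact_sphere closed_Collect_eq continuous_intros)
  obtain c0 where "c0 > 0" and c0: "\<And>d. d \<in> S \<Longrightarrow> c0 \<le> bregman \<theta> d"
  proof (cases "S = {}")
    case False
    from continuous_attains_inf[OF \<open>compact S\<close> False continuous_on_subset[OF continuous_on_bregman[of \<theta>]]]
    obtain d0 where "d0 \<in> S" and "\<And>d. d \<in> S \<Longrightarrow> bregman \<theta> d0 \<le> bregman \<theta> d" by auto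
    moreover have "0 < bregman \<theta> d0"
    proof -
      have "d0 \<noteq> 0" using \<open>d0 \<in> S\<close> assms by (auto simp: S_def)
      then obtain j where "d0$j \<noteq> d0$i"
        using \<open>d0 \<in> S\<close> by (auto simp: S_def vec_eq_iff)
      then show ?thesis by (rule bregman_pos)
    qed
    ultimately show ?thesis using that by blast
  qed (use that[of 1] in simp)
  show ?thesis
  proof
    show "0 < c0 / \<epsilon>" using \<open>c0 > 0\<close> assms by simp
    fix d :: "real^'n" assume "d$i = 0" "\<epsilon> \<le> norm d"
    define t where "t = \<epsilon> / norm d"
    have "norm d > 0" using assms \<open>\<epsilon> \<le> norm d\<close> by linarith
    then have "0 \<le> t" "t \<le> 1" "t *\<^sub>R d \<in> S"
      using assms \<open>\<epsilon> \<le> norm d\<close> \<open>d$i = 0\<close> by (auto simp: t_def S_def)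
    then have "c0 \<le> t * bregman \<theta> d"
      using c0 bregman_scaleR_le order_trans by blast
    then show "c0 / \<epsilon> * norm d \<le> bregman \<theta> d"
      using assms \<open>norm d > 0\<close> by (simp add: t_def field_simps)
  qed
qed

lemma conjugate_le_linearization:
  assumes "\<epsilon> > 0"
  obtains \<delta> where "\<delta> > 0" and "\<And>y. y \<in> prob_simplex \<Longrightarrow> norm (y - G \<theta>) < \<delta> \<Longrightarrow>
      conjugate F y \<le> \<theta> \<bullet> y - F \<theta> + \<epsilon> * norm (y - G \<theta>)"
proof -
  \<comment> \<open>Any coordinate i will do: splitting \<open>\<theta>' - \<theta> = d + a (1,...,1)\<close> with \<open>d$i = 0\<close>, the constant part
    changes neither \<open>(\<theta>' - \<theta>) \<bullet> (y - G \<theta>)\<close> nor the Bregman divergence.\<close>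
  fix i :: 'n
  obtain c where "c > 0" and growth: "\<And>d. d$i = 0 \<Longrightarrow> \<epsilon> \<le> norm d \<Longrightarrow> c * norm d \<le> bregman \<theta> d"
    using bregman_linear_growth[OF assms] by blast
  show ?thesis
  proof (rule that[OF \<open>c > 0\<close>], rule conjugate_le)
    fix y \<theta>' assume y: "y \<in> prob_simplex" and near: "norm (y - G \<theta>) < c"
    define v where "v = y - G \<theta>"
    define a where "a = (\<theta>' - \<theta>)$i"
    define d where "d = \<theta>' - \<theta> - (\<chi> j. a)"
    have dc: "\<theta>' - \<theta> = d + (\<chi> j. a)" by (simp add: d_def)
    have "F \<theta>' = F \<theta> + G \<theta> \<bullet> (\<theta>' - \<theta>) + bregman \<theta> d"
      using bregman_add_const[of \<theta> d a] unfolding bregman_def dc[symmetric] by simp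
    moreover have "(\<theta>' - \<theta>) \<bullet> v = \<theta>' \<bullet> y - \<theta> \<bullet> y - G \<theta> \<bullet> (\<theta>' - \<theta>)"
      by (simp add: v_def inner_diff_left inner_diff_right inner_commute)
    moreover have "(\<theta>' - \<theta>) \<bullet> v = d \<bullet> v"
    proof -
      have "(\<Sum>j\<in>UNIV. v$j) = 0"
        using sum_prob_simplex[OF y] sum_prob_simplex[OF gradient_in_simplex[of \<theta>]]
        by (simp add: v_def sum_subtractf)
      then show ?thesis by (simp add: dc inner_add_left inner_const_vec)
    qed
    ultimately have "\<theta>' \<bullet> y - F \<theta>' = \<theta> \<bullet> y - F \<theta> + (d \<bullet> v - bregman \<theta> d)"
      by linarith
    also have "d \<bullet> v - bregman \<theta> d \<le> \<epsilon> * norm v"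
    proof (cases "norm d < \<epsilon>")
      case True
      have "d \<bullet> v \<le> norm d * norm v" by (rule norm_cauchy_schwarz)
      also have "\<dots> \<le> \<epsilon> * norm v" using True by (simp add: mult_right_mono)
      finally show ?thesis using bregman_nonneg[of \<theta> d] by linarith
    next
      case False
      then have "c * norm d \<le> bregman \<theta> d"
        by (intro growth) (auto simp: d_def a_def)
      moreover have "d \<bullet> v \<le> norm d * norm v" by (rule norm_cauchy_schwarz)
      moreover have "norm d * norm v \<le> norm d * c"
        using near by (simp add: v_def mult_left_mono)
      moreover have "0 \<le> \<epsilon> * norm v" using \<open>\<epsilon> > 0\<close> by simp
      ultimately show ?thesis by (simp add: mult.commute)
    qed
    finally show "\<theta>' \<bullet> y - F \<theta>' \<le> \<theta> \<bullet> y - F \<theta> + \<epsilon> * norm (y - G \<theta>)"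
      by (simp add: v_def)
  qed
qed

lemma conjugate_differentiable:
  assumes x: "x \<in> rel_interior prob_simplex"
  shows "conjugate F differentiable (at x within affine hull prob_simplex)"
proof -
  obtain e where "e > 0" and ball: "ball x e \<inter> affine hull prob_simplex \<subseteq> prob_simplex"
    and "x \<in> prob_simplex"
    using x unfolding rel_interior_ball by blast
  obtain \<theta> where x_eq: "x = G \<theta>"
    using gradient_surjective[OF \<open>x \<in> prob_simplex\<close> rel_interior_prob_simplex_pos[OF x]] by metis
  have "(conjugate F has_derivative (\<lambda>h. \<theta> \<bullet> h)) (at x within affine hull prob_simplex)"
    unfolding has_derivative_within_alt
  proof (intro conjI allI impI bounded_linear_inner_right)
    fix \<epsilon> :: real assume "\<epsilon> > 0"
    obtain \<delta> where "\<delta> > 0" and upper: "\<And>y. y \<in> prob_simplex \<Longrightarrow> norm (y - x) < \<delta> \<Longrightarrow>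
        conjugate F y \<le> \<theta> \<bullet> y - F \<theta> + \<epsilon> * norm (y - x)"
      using conjugate_le_linearization[OF \<open>\<epsilon> > 0\<close>, of \<theta>] unfolding x_eq by blast
    show "\<exists>d>0. \<forall>y\<in>affine hull prob_simplex. norm (y - x) < d \<longrightarrow>
        norm (conjugate F y - conjugate F x - \<theta> \<bullet> (y - x)) \<le> \<epsilon> * norm (y - x)"
    proof (intro exI[of _ "min \<delta> e"] conjI ballI impI)
      fix y assume "y \<in> affine hull prob_simplex" and near: "norm (y - x) < min \<delta> e"
      then have y: "y \<in> prob_simplex"
        using ball by (auto simp: dist_norm norm_minus_commute)
      have "conjugate F x = \<theta> \<bullet> x - F \<theta>"
        unfolding x_eq by (rule conjugate_gradient)
      then show "norm (conjugate F y - conjugate F x - \<theta> \<bullet> (y - x)) \<le> \<epsilon> * norm (y - x)"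
        using conjugate_ge[OF y, of \<theta>] upper[OF y] near by (simp add: inner_diff_right)
    qed (use \<open>\<delta> > 0\<close> \<open>e > 0\<close> in simp)
  qed
  then show ?thesis unfolding differentiable_def by blast
qed

lemma conjugate_strongly_convex:
  assumes "x \<in> prob_simplex" and "y \<in> prob_simplex" and "0 \<le> t" "t \<le> 1"
    and "0 \<le> \<kappa>" "\<kappa> \<le> 1 / (4 * C)"
  shows "conjugate F (t *\<^sub>R x + (1 - t) *\<^sub>R y)
           \<le> t * conjugate F x + (1 - t) * conjugate F y - \<kappa> * t * (1 - t) * (infnorm (x - y))\<^sup>2"
proof -
  obtain k where "infnorm (x - y) = \<bar>x$k - y$k\<bar>"
    using infnorm_attained_cart[of "x - y"] by auto
  then have "(infnorm (x - y))\<^sup>2 = (x$k - y$k)\<^sup>2" by simp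
  moreover have "\<kappa> * (t * (1 - t) * (x$k - y$k)\<^sup>2) \<le> 1 / (4 * C) * (t * (1 - t) * (x$k - y$k)\<^sup>2)"
    using assms by (intro mult_right_mono) auto
  ultimately show ?thesis
    using conjugate_strongly_convex_coordinate[OF assms(1-4), of k] by (simp add: mult.assoc)
qed

lemma strict_midpoint_scaled:
  assumes "\<eta> > 0" and "d$i \<noteq> d$k"
  shows "\<eta> * F ((1/\<eta>) *\<^sub>R (\<theta> + (1/2) *\<^sub>R d))
           < (\<eta> * F ((1/\<eta>) *\<^sub>R \<theta>) + \<eta> * F ((1/\<eta>) *\<^sub>R (\<theta> + d))) / 2"
proof -
  have "((1/\<eta>) *\<^sub>R d)$i \<noteq> ((1/\<eta>) *\<^sub>R d)$k" using assms by simp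
  moreover have "(1/\<eta>) *\<^sub>R (\<theta> + (1/2) *\<^sub>R d) = (1/\<eta>) *\<^sub>R \<theta> + (1/2) *\<^sub>R ((1/\<eta>) *\<^sub>R d)"
    "(1/\<eta>) *\<^sub>R (\<theta> + d) = (1/\<eta>) *\<^sub>R \<theta> + (1/\<eta>) *\<^sub>R d"
    by (simp_all add: scaleR_add_right)
  ultimately have "F ((1/\<eta>) *\<^sub>R (\<theta> + (1/2) *\<^sub>R d)) < (F ((1/\<eta>) *\<^sub>R \<theta>) + F ((1/\<eta>) *\<^sub>R (\<theta> + d))) / 2"
    by (metis strict_midpoint)
  from mult_strict_left_mono[OF this \<open>\<eta> > 0\<close>] show ?thesis
    by (simp add: field_simps)
qed

lemma coordinate_smooth_scaled:
  assumes "\<eta> > 0"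
  shows "\<eta> * F ((1/\<eta>) *\<^sub>R (\<theta> + s *\<^sub>R axis k 1))
           \<le> \<eta> * F ((1/\<eta>) *\<^sub>R \<theta>) + s * G ((1/\<eta>) *\<^sub>R \<theta>) $ k + C / \<eta> * s\<^sup>2"
proof -
  have "(1/\<eta>) *\<^sub>R (\<theta> + s *\<^sub>R axis k 1) = (1/\<eta>) *\<^sub>R \<theta> + (s/\<eta>) *\<^sub>R axis k 1"
    by (simp add: scaleR_add_right)
  then have "\<eta> * F ((1/\<eta>) *\<^sub>R (\<theta> + s *\<^sub>R axis k 1))
      \<le> \<eta> * (F ((1/\<eta>) *\<^sub>R \<theta>) + s/\<eta> * G ((1/\<eta>) *\<^sub>R \<theta>) $ k + C * (s/\<eta>)\<^sup>2)"
    using coordinate_smooth[of "(1/\<eta>) *\<^sub>R \<theta>" "s/\<eta>" k] assms by simp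
  also have "\<dots> = \<eta> * F ((1/\<eta>) *\<^sub>R \<theta>) + s * G ((1/\<eta>) *\<^sub>R \<theta>) $ k + C / \<eta> * s\<^sup>2"
    using assms by (simp add: field_simps power2_eq_square)
  finally show ?thesis .
qed

lemma surplus_potential_scaled:
  assumes "\<eta> > 0"
  shows "surplus_potential (\<lambda>\<theta>. \<eta> * F ((1/\<eta>) *\<^sub>R \<theta>)) (\<lambda>\<theta>. G ((1/\<eta>) *\<^sub>R \<theta>)) (C / \<eta>)"
proof
  fix \<theta> :: "real^'n"
  have "((\<lambda>\<theta>. (1/\<eta>) *\<^sub>R \<theta>) has_derivative (\<lambda>h. (1/\<eta>) *\<^sub>R h)) (at \<theta>)"
    by (auto intro!: derivative_eq_intros)
  from has_derivative_mult_right[OF has_derivative_compose[OF this has_gradient], of \<eta>]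
  show "((\<lambda>\<theta>. \<eta> * F ((1/\<eta>) *\<^sub>R \<theta>)) has_derivative (\<lambda>h. G ((1/\<eta>) *\<^sub>R \<theta>) \<bullet> h)) (at \<theta>)"
    by (rule has_derivative_eq_rhs) (use assms in \<open>auto simp: fun_eq_iff\<close>)
next
  show "convex_on UNIV (\<lambda>\<theta>. \<eta> * F ((1/\<eta>) *\<^sub>R \<theta>))"
  proof (rule convex_onI)
    fix t :: real and \<theta> \<theta>' :: "real^'n" assume "0 < t" "t < 1"
    then have "F ((1/\<eta>) *\<^sub>R ((1 - t) *\<^sub>R \<theta> + t *\<^sub>R \<theta>')) \<le> (1 - t) * F ((1/\<eta>) *\<^sub>R \<theta>) + t * F ((1/\<eta>) *\<^sub>R \<theta>')"
      using convex_onD[OF convex, of t "(1/\<eta>) *\<^sub>R \<theta>" "(1/\<eta>) *\<^sub>R \<theta>'"] by (simp add: scaleR_add_right)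
    from mult_left_mono[OF this less_imp_le[OF assms]]
    show "\<eta> * F ((1/\<eta>) *\<^sub>R ((1 - t) *\<^sub>R \<theta> + t *\<^sub>R \<theta>')) \<le> (1 - t) * (\<eta> * F ((1/\<eta>) *\<^sub>R \<theta>)) + t * (\<eta> * F ((1/\<eta>) *\<^sub>R \<theta>'))"
      by (simp add: algebra_simps)
  qed simp
next
  fix \<theta> :: "real^'n" and c
  have "(1/\<eta>) *\<^sub>R (\<theta> + (\<chi> i. c)) = (1/\<eta>) *\<^sub>R \<theta> + (\<chi> i. c / \<eta>)"
    by (simp add: vec_eq_iff add_divide_distrib)
  then show "\<eta> * F ((1/\<eta>) *\<^sub>R (\<theta> + (\<chi> i. c))) = \<eta> * F ((1/\<eta>) *\<^sub>R \<theta>) + c"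
    using assms by (simp add: add_const distrib_left)
next
  fix \<theta> \<theta>' :: "real^'n" assume "\<And>i. \<theta>$i \<le> \<theta>'$i"
  then show "\<eta> * F ((1/\<eta>) *\<^sub>R \<theta>) \<le> \<eta> * F ((1/\<eta>) *\<^sub>R \<theta>')"
    using assms by (simp add: mono divide_right_mono)
next
  fix \<theta> :: "real^'n" and j
  show "\<theta>$j \<le> \<eta> * F ((1/\<eta>) *\<^sub>R \<theta>)"
    using component_le[of "(1/\<eta>) *\<^sub>R \<theta>" j] assms by (simp add: divide_le_eq mult.commute)
qed (use assms C_pos strict_midpoint_scaled coordinate_smooth_scaled in auto)

end

lemma surplus_eq_vmax: "surplus P \<eta> \<theta> = (\<integral>e. vmax (\<theta> + \<eta> *\<^sub>R e) \<partial>P)"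
  unfolding surplus_def vmax_def by simp

lemma surplus_scale:
  assumes "\<eta> > 0"
  shows "surplus P \<eta> \<theta> = \<eta> * surplus P 1 ((1 / \<eta>) *\<^sub>R \<theta>)"
proof -
  have "vmax (\<theta> + \<eta> *\<^sub>R e) = \<eta> * vmax ((1 / \<eta>) *\<^sub>R \<theta> + e)" for e
    using vmax_scaleR[of \<eta> "(1 / \<eta>) *\<^sub>R \<theta> + e"] assms by (simp add: scaleR_add_right)
  then show ?thesis by (simp add: surplus_eq_vmax)
qed

locale additive_random_utility = prob_space P for P :: "(real^'n::finite) measure" +
  assumes sets_P: "sets P = sets borel"
    and integrable_component: "\<And>i. integrable P (\<lambda>e. e$i)"
    and mean_zero: "\<And>i. (\<integral>e. e$i \<partial>P) = 0"
    and full_support: "\<And>U. open U \<Longrightarrow> U \<noteq> {} \<Longrightarrow> emeasure P U > 0"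
begin

lemma continuous_imp_measurable: "continuous_on UNIV f \<Longrightarrow> f \<in> borel_measurable P"
  using measurable_cong_sets[OF sets_P refl] borel_measurable_continuous_onI by blast

lemma integrable_vmax: "integrable P (\<lambda>e. vmax (\<theta> + e))"
proof (rule Bochner_Integration.integrable_bound)
  show "integrable P (\<lambda>e. norm \<theta> + (\<Sum>i\<in>UNIV. \<bar>e$i\<bar>))"
    using integrable_component by (intro Bochner_Integration.integrable_add integrable_sum integrable_abs) auto
  show "(\<lambda>e. vmax (\<theta> + e)) \<in> borel_measurable P"
    by (intro continuous_imp_measurable continuous_on_compose2[OF continuous_on_vmax] continuous_intros) auto
  show "AE e in P. norm (vmax (\<theta> + e)) \<le> norm (norm \<theta> + (\<Sum>i\<in>UNIV. \<bar>e$i\<bar>))"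
  proof (rule AE_I2)
    fix e :: "real^'n"
    have "\<bar>vmax (\<theta> + e)\<bar> \<le> norm \<theta> + norm e"
      using vmax_le_norm[of "\<theta> + e"] norm_triangle_ineq[of \<theta> e] by linarith
    also have "\<dots> \<le> norm \<theta> + (\<Sum>i\<in>UNIV. \<bar>e$i\<bar>)"
      using norm_le_l1_cart[of e] by simp
    finally show "norm (vmax (\<theta> + e)) \<le> norm (norm \<theta> + (\<Sum>i\<in>UNIV. \<bar>e$i\<bar>))"
      by simp
  qed
qed

lemma integral_pos_of_full_support:
  fixes f :: "real^'n \<Rightarrow> real"
  assumes nonneg: "\<And>e. 0 \<le> f e" and cont: "continuous_on UNIV f" and pos: "0 < f e0"
    and int: "integrable P f"
  shows "0 < (\<integral>e. f e \<partial>P)"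
proof -
  let ?U = "{e. 0 < f e}"
  have "open ?U"
    using open_Collect_less[of "\<lambda>_. 0" f] cont by simp
  with pos have "emeasure P ?U > 0"
    using full_support by blast
  moreover have "?U \<in> sets P"
    using \<open>open ?U\<close> sets_P by simp
  ultimately have "\<not> (AE e in P. f e = 0)"
    using AE_iff_measurable[of ?U P "\<lambda>e. f e = 0"] nonneg
    by (auto simp: sets_eq_imp_space_eq[OF sets_P] less_le)
  then show ?thesis
    using integral_nonneg_eq_0_iff_AE[OF int] nonneg integral_nonneg_AE[of f P]
    by (auto simp: less_le)
qed

lemma surplus_1: "surplus P 1 \<theta> = (\<integral>e. vmax (\<theta> + e) \<partial>P)"
  by (simp add: surplus_eq_vmax)

lemma convex_surplus: "convex_on UNIV (surplus P 1)"
proof (rule convex_onI)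
  fix t :: real and \<theta> \<theta>' :: "real^'n" assume t: "0 < t" "t < 1"
  have "vmax ((1 - t) *\<^sub>R \<theta> + t *\<^sub>R \<theta>' + e) \<le> (1 - t) * vmax (\<theta> + e) + t * vmax (\<theta>' + e)" for e
    using convex_onD[OF convex_vmax, of t "\<theta> + e" "\<theta>' + e"] t by (simp add: algebra_simps)
  then have "surplus P 1 ((1 - t) *\<^sub>R \<theta> + t *\<^sub>R \<theta>') \<le> (\<integral>e. (1 - t) * vmax (\<theta> + e) + t * vmax (\<theta>' + e) \<partial>P)"
    unfolding surplus_1
    by (intro integral_mono Bochner_Integration.integrable_add integrable_mult_right integrable_vmax)
  also have "\<dots> = (1 - t) * surplus P 1 \<theta> + t * surplus P 1 \<theta>'"
    by (simp add: surplus_1 integrable_vmax)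
  finally show "surplus P 1 ((1 - t) *\<^sub>R \<theta> + t *\<^sub>R \<theta>') \<le> (1 - t) * surplus P 1 \<theta> + t * surplus P 1 \<theta>'" .
qed simp

lemma surplus_add_const: "surplus P 1 (\<theta> + (\<chi> i. c)) = surplus P 1 \<theta> + c"
proof -
  have "vmax (\<theta> + (\<chi> i. c) + e) = vmax (\<theta> + e) + c" for e
    using vmax_add_const[of "\<theta> + e" c] by (simp add: add.assoc add.commute[of "\<chi> i. c"])
  then show ?thesis by (simp add: surplus_1 integrable_vmax prob_space)
qed

lemma surplus_mono: "(\<And>i. \<theta>$i \<le> \<theta>'$i) \<Longrightarrow> surplus P 1 \<theta> \<le> surplus P 1 \<theta>'"
  unfolding surplus_1 by (intro integral_mono integrable_vmax vmax_mono) simp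

lemma component_le_surplus: "\<theta>$j \<le> surplus P 1 \<theta>"
proof -
  have "(\<integral>e. \<theta>$j + e$j \<partial>P) \<le> surplus P 1 \<theta>"
    unfolding surplus_1 using component_le_vmax[of "\<theta> + _" j]
    by (intro integral_mono integrable_vmax Bochner_Integration.integrable_add integrable_component) auto
  then show ?thesis
    by (simp add: integrable_component mean_zero prob_space)
qed

lemma surplus_strict_midpoint:
  assumes "d$i \<noteq> d$k"
  shows "surplus P 1 (\<theta> + (1/2) *\<^sub>R d) < (surplus P 1 \<theta> + surplus P 1 (\<theta> + d)) / 2"
proof -
  \<comment> \<open>The midpoint inequality of the integrand is strict at \<open>e = - \<theta> - d/2\<close>; by full support
    the integrated inequality is then strict too.\<close>
  define f where "f e = (vmax (\<theta> + e) + vmax (\<theta> + d + e)) / 2 - vmax (\<theta> + (1/2) *\<^sub>R d + e)" for e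
  have "0 \<le> f e" for e
  proof -
    have "\<theta> + (1/2) *\<^sub>R d + e = (1 - 1/2) *\<^sub>R (\<theta> + e) + (1/2) *\<^sub>R (\<theta> + d + e)"
      by (simp add: vec_eq_iff field_simps)
    then show ?thesis
      using convex_onD[OF convex_vmax, of "1/2" "\<theta> + e" "\<theta> + d + e"] by (simp add: f_def)
  qed
  moreover have "continuous_on UNIV f"
    unfolding f_def by (intro continuous_intros continuous_on_compose2[OF continuous_on_vmax]) auto
  moreover have "0 < f (- \<theta> - (1/2) *\<^sub>R d)"
  proof -
    define v where "v = (1/2) *\<^sub>R d"
    have "\<theta> + (- \<theta> - v) = - v" "\<theta> + d + (- \<theta> - v) = v" "\<theta> + v + (- \<theta> - v) = 0"
      by (simp_all add: v_def vec_eq_iff)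
    then have "f (- \<theta> - v) = (vmax (- v) + vmax v) / 2"
      unfolding f_def v_def[symmetric] by simp
    moreover have "0 < vmax v + vmax (- v)"
      by (rule vmax_add_vmax_uminus_pos[of _ i k]) (use assms in \<open>simp add: v_def\<close>)
    ultimately show ?thesis by (simp add: v_def)
  qed
  moreover have "integrable P f"
    unfolding f_def
    by (intro Bochner_Integration.integrable_diff integrable_divide Bochner_Integration.integrable_add integrable_vmax)
  ultimately have "0 < (\<integral>e. f e \<partial>P)"
    by (rule integral_pos_of_full_support)
  also have "(\<integral>e. f e \<partial>P) = (surplus P 1 \<theta> + surplus P 1 (\<theta> + d)) / 2 - surplus P 1 (\<theta> + (1/2) *\<^sub>R d)"
    unfolding f_def surplus_1 by (simp add: integrable_vmax)
  finally show ?thesis by simp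
qed

lemma surplus_potential_surplus:
  assumes grad: "\<And>\<theta>. (surplus P 1 has_derivative (\<lambda>h. g \<theta> \<bullet> h)) (at \<theta>)"
    and hess: "\<And>\<theta>. (g has_derivative (\<lambda>h. H \<theta> *v h)) (at \<theta>)"
    and trace_bd: "\<And>\<theta>. 2 * trace (H \<theta>) \<le> L"
    and "L > 0" and "\<eta> > 0"
  shows "surplus_potential (surplus P \<eta>) (\<lambda>\<theta>. g ((1/\<eta>) *\<^sub>R \<theta>)) (L / (4 * \<eta>))"
proof -
  interpret surplus_potential "surplus P 1" g "L / 4"
    using grad convex_surplus surplus_add_const surplus_mono component_le_surplus
      surplus_strict_midpoint coordinate_smooth_of_trace_bound[OF convex_surplus grad hess trace_bd] \<open>L > 0\<close>
    by unfold_locales auto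
  have "surplus P \<eta> = (\<lambda>\<theta>. \<eta> * surplus P 1 ((1/\<eta>) *\<^sub>R \<theta>))"
    using surplus_scale[OF \<open>\<eta> > 0\<close>] by blast
  then show ?thesis
    using surplus_potential_scaled[OF \<open>\<eta> > 0\<close>] by simp
qed

end

theorem proposition3:
  fixes P :: "(real^'n::finite) measure" and \<eta> L :: real
    and g :: "real^'n \<Rightarrow> real^'n" and H :: "real^'n \<Rightarrow> real^'n^'n"
  assumes N2: "CARD('n) \<ge> 2"
    \<comment> \<open>Assumption 1\<close>
    and prob: "prob_space P" and sets_P: "sets P = sets borel"
    and integ: "\<And>i. integrable P (\<lambda>e. e$i)"
    and mean0: "\<And>i. (\<integral>e. e$i \<partial>P) = 0"
    and abs_cont: "absolutely_continuous lborel P"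
    and full_supp: "\<And>U. open U \<Longrightarrow> U \<noteq> {} \<Longrightarrow> emeasure P U > 0"
    \<comment> \<open>Assumption 2: phi_1 is C^2 with gradient g and Hessian H, and 2 tr(H) <= L\<close>
    and grad: "\<And>\<theta>. (surplus P 1 has_derivative (\<lambda>h. g \<theta> \<bullet> h)) (at \<theta>)"
    and hess: "\<And>\<theta>. (g has_derivative (\<lambda>h. H \<theta> *v h)) (at \<theta>)"
    and hess_cont: "continuous_on UNIV H"
    and L_pos: "L > 0"
    and trace_bd: "\<And>\<theta>. 2 * trace (H \<theta>) \<le> L"
    and eta_pos: "\<eta> > 0"
  shows
    "(\<forall>x\<in>prob_simplex. \<forall>y\<in>prob_simplex. \<forall>t\<in>{0..1::real}.
        regR P \<eta> (t *\<^sub>R x + (1 - t) *\<^sub>R y)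
          \<le> t * regR P \<eta> x + (1 - t) * regR P \<eta> y
             - \<eta> / (2 * L) * t * (1 - t) * (infnorm (x - y))\<^sup>2)
     \<and> (\<forall>x\<in>rel_interior prob_simplex. regR P \<eta> differentiable (at x within affine hull prob_simplex))
     \<and> (\<forall>\<theta>. (\<exists>!x. x \<in> prob_simplex \<and>
                 (\<forall>y\<in>prob_simplex. \<theta> \<bullet> y - regR P \<eta> y \<le> \<theta> \<bullet> x - regR P \<eta> x))
           \<and> (\<forall>x. x \<in> prob_simplex \<and>
                 (\<forall>y\<in>prob_simplex. \<theta> \<bullet> y - regR P \<eta> y \<le> \<theta> \<bullet> x - regR P \<eta> x)
                 \<longrightarrow> (surplus P \<eta> has_derivative (\<lambda>h. x \<bullet> h)) (at \<theta>)))"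
proof -
  interpret additive_random_utility P
    using prob sets_P integ mean0 full_supp
    by (simp add: additive_random_utility_def additive_random_utility_axioms_def)
  interpret surplus_potential "surplus P \<eta>" "\<lambda>\<theta>. g ((1/\<eta>) *\<^sub>R \<theta>)" "L / (4 * \<eta>)"
    by (rule surplus_potential_surplus[OF grad hess trace_bd L_pos eta_pos])
  have R: "regR P \<eta> = conjugate (surplus P \<eta>)"
    by (simp add: fun_eq_iff regR_def conjugate_def)
  have modulus: "\<eta> / (2 * L) \<le> 1 / (4 * (L / (4 * \<eta>)))"
    using eta_pos L_pos by (simp add: field_simps)
  show ?thesis
    unfolding R conjugate_argmax_iff
    using conjugate_strongly_convex[OF _ _ _ _ _ modulus] conjugate_differentiable has_gradient
      eta_pos L_pos by (auto simp: inner_commute)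
qed

end
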